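(* Suppose $F_i$ satisfies the Production Function Assumption (b) and $W_i$ satisfies the Labor Cost and Growth Assumptions. Then: (i) For all $\mathbf P\in\mathbb R^N_{>0}$, $P_E>0$ and $x\in\mathcal O_i$, the problem $\overline\Pi_i(\mathbf P,P_E,x):=\max_{(\mathbf q_i,E_i,L_i)\in\mathbb R^{N+2}_{\ge0}}\Pi_i(\mathbf P,\mathbf q_i,E_i,L_i,P_E,x)$ admits a solution; if $F_i$ is strictly concave and $W_i$ strictly convex, it is unique. (ii) $\overline\Pi_i(\mathbf P,P_E,x)=W_i^*\big(\widetilde\Pi_i(\mathbf P,P_E)-x\big)$. (iii) If $W_i$ is strictly convex and differentiable, optimal inputs are $L_i^*=(W_i')^{-1}(\widetilde\Pi_i(\mathbf P,P_E)-x)$, $q^*_{ij}=\tilde q^*_{ij}L_i^*$ ($j=1,\dots,N$), $E_i^*=\tilde E_i^*L_i^*$, where $(\tilde{\mathbf q}_i^*,\tilde E_i^* )$ maximizes the problem defining $\widetilde\Pi_i(\mathbf P,P_E)$.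
   Context: $\mathcal O_i\subseteq\mathbb R_{>0}$ is the state space of sector $i$. Production function $F_i:\mathbb R^{N+2}_{\ge0}\to\mathbb R_{\ge0}$, labor cost $W_i:\mathbb R_{\ge0}\to\mathbb R_{>0}$. Instantaneous profit: $\Pi_i(\mathbf P,\mathbf q_i,E_i,L_i,P_E,x)=P_iF_i(\mathbf q_i,E_i,L_i)-\sum_{j=1}^NP_jq_{ij}-P_EE_i-W_i(L_i)-xL_i$. $W_i^*(y)=\max_{L\ge0}\{Ly-W_i(L)\}$. $\widetilde\Pi_i(\mathbf P,P_E)=\max_{\tilde{\mathbf q}_i\ge0,\tilde E_i\ge0}\{P_iF_i(\tilde{\mathbf q}_i,\tilde E_i,1)-\sum_jP_j\tilde q_{ij}-P_E\tilde E_i\}$. Production Function Assumption (b): $F_i$ increasing in each argument, upper semi-continuous, concave, homogeneous of degree one, and $F_i(\mathbf q,E,L)\le c_iL$ for some $c_i<\infty$. Labor Cost Assumption: $W_i$ strictly increasing, lower semi-continuous, convex. Growth Assumption: $\lim_{L\to\infty}W_i(L)/L=+\infty$. *)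

theory Defs
  imports "HOL-Analysis.Analysis"
begin

definition usc_on :: "'a::topological_space set \<Rightarrow> ('a \<Rightarrow> real) \<Rightarrow> bool" where
  "usc_on S f \<longleftrightarrow> (\<forall>x\<in>S. \<forall>e>0. \<forall>\<^sub>F y in at x within S. f y < f x + e)"

definition lsc_on :: "'a::topological_space set \<Rightarrow> ('a \<Rightarrow> real) \<Rightarrow> bool" where
  "lsc_on S f \<longleftrightarrow> (\<forall>x\<in>S. \<forall>e>0. \<forall>\<^sub>F y in at x within S. f x - e < f y)"

definition strict_convex_on :: "'a::real_vector set \<Rightarrow> ('a \<Rightarrow> real) \<Rightarrow> bool" where
  "strict_convex_on S f \<longleftrightarrow> (\<forall>x\<in>S. \<forall>y\<in>S. x \<noteq> y \<longrightarrow>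
     (\<forall>u::real. 0 < u \<and> u < 1 \<longrightarrow>
        f ((1 - u) *\<^sub>R x + u *\<^sub>R y) < (1 - u) * f x + u * f y))"

definition strict_concave_on :: "'a::real_vector set \<Rightarrow> ('a \<Rightarrow> real) \<Rightarrow> bool" where
  "strict_concave_on S f \<longleftrightarrow> strict_convex_on S (\<lambda>x. - f x)"

text \<open>Input space R^{N+2}_{\<ge>0}: triples (q, E, L), q \<in> R^N (indexed by the finite type 'n).\<close>
definition inputs :: "((real^'n) \<times> real \<times> real) set" where
  "inputs = {(q, E, L). (\<forall>j. 0 \<le> q $ j) \<and> 0 \<le> E \<and> 0 \<le> L}"

definition profit ::
  "((real^'n) \<times> real \<times> real \<Rightarrow> real) \<Rightarrow> (real \<Rightarrow> real) \<Rightarrow> 'n \<Rightarrow>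
   real^'n \<Rightarrow> real^'n \<Rightarrow> real \<Rightarrow> real \<Rightarrow> real \<Rightarrow> real \<Rightarrow> real" where
  "profit F W i P q E L PE x =
     P $ i * F (q, E, L) - (\<Sum>j\<in>UNIV. P $ j * q $ j) - PE * E - W L - x * L"

text \<open>Optimal profit \<open>\<Pi>bar\<close> (the maximum, written as a supremum).\<close>
definition profit_bar ::
  "((real^'n) \<times> real \<times> real \<Rightarrow> real) \<Rightarrow> (real \<Rightarrow> real) \<Rightarrow> 'n \<Rightarrow>
   real^'n \<Rightarrow> real \<Rightarrow> real \<Rightarrow> real" where
  "profit_bar F W i P PE x =
     Sup ((\<lambda>(q, E, L). profit F W i P q E L PE x) ` inputs)"

definition Wstar :: "(real \<Rightarrow> real) \<Rightarrow> real \<Rightarrow> real" where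
  "Wstar W y = Sup ((\<lambda>L. L * y - W L) ` {0..})"

definition unit_profit ::
  "((real^'n) \<times> real \<times> real \<Rightarrow> real) \<Rightarrow> 'n \<Rightarrow> real^'n \<Rightarrow> real \<Rightarrow> real^'n \<Rightarrow> real \<Rightarrow> real" where
  "unit_profit F i P PE q E = P $ i * F (q, E, 1) - (\<Sum>j\<in>UNIV. P $ j * q $ j) - PE * E"

definition unit_inputs :: "((real^'n) \<times> real) set" where
  "unit_inputs = {(q, E). (\<forall>j. 0 \<le> q $ j) \<and> 0 \<le> E}"

definition profit_tilde ::
  "((real^'n) \<times> real \<times> real \<Rightarrow> real) \<Rightarrow> 'n \<Rightarrow> real^'n \<Rightarrow> real \<Rightarrow> real" where
  "profit_tilde F i P PE = Sup ((\<lambda>(q, E). unit_profit F i P PE q E) ` unit_inputs)"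

end

theory Submission
  imports Defs
begin

(*
  By homogeneity of degree one, an input (q, E, L) with L > 0 is L times the unit-labor
  input (q/L, E/L, 1), so its profit is L * unit_profit (q/L) (E/L) - W L - x L, which is
  at most L (Pi~ - x) - W L, with equality when the unit input is optimal.  The problem thus
  splits into maximizing the unit profit, an upper semicontinuous function that is negative
  outside a compact budget set, and maximizing L (Pi~ - x) - W L over L >= 0, an upper
  semicontinuous function that tends to -infinity by the growth assumption; this gives (i)
  and (ii).  For (iii), convexity of W makes W' L* = Pi~ - x a sufficient condition for
  L* to be optimal.  The uniqueness clause of (i) holds vacuously: a function homogeneous of
  degree one is linear along rays, hence never strictly concave.
*)

lemma usc_on_subset: "usc_on S f \<Longrightarrow> K \<subseteq> S \<Longrightarrow> usc_on K f"
  unfolding usc_on_def by (meson at_le filter_leD subsetD)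

lemma closed_superlevel_usc_on:
  fixes f :: "'a::topological_space \<Rightarrow> real"
  assumes "closed K" and usc: "usc_on K f"
  shows "closed {w\<in>K. a \<le> f w}"
  unfolding closed_limpt
proof (intro allI impI)
  fix z assume lim: "z islimpt {w\<in>K. a \<le> f w}"
  then have "z \<in> K"
    using \<open>closed K\<close> closed_limpt islimpt_subset by (metis (no_types, lifting) mem_Collect_eq subsetI)
  show "z \<in> {w\<in>K. a \<le> f w}"
  proof (rule ccontr)
    assume "z \<notin> {w\<in>K. a \<le> f w}"
    with \<open>z \<in> K\<close> have "0 < a - f z" by simp
    with usc \<open>z \<in> K\<close> have "\<forall>\<^sub>F w in at z within K. f w < f z + (a - f z)"
      unfolding usc_on_def by blast
    then obtain S where "open S" "z \<in> S" and below: "\<And>w. w \<in> S \<Longrightarrow> w \<in> K \<Longrightarrow> w \<noteq> z \<Longrightarrow> f w < a"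
      unfolding eventually_at_topological by auto
    with lim obtain w where "w \<in> K" "a \<le> f w" "w \<in> S" "w \<noteq> z"
      unfolding islimpt_def by blast
    with below show False by fastforce
  qed
qed

lemma usc_on_attains_max:
  fixes f :: "'a::t2_space \<Rightarrow> real"
  assumes "compact K" "K \<noteq> {}" "usc_on K f"
  shows "\<exists>z\<in>K. \<forall>y\<in>K. f y \<le> f z"
proof -
  have "K \<inter> (\<Inter>y\<in>K. {w\<in>K. f y \<le> f w}) \<noteq> {}"
  proof (rule compact_imp_fip_image[OF \<open>compact K\<close>])
    show "closed {w\<in>K. f y \<le> f w}" for y
      by (rule closed_superlevel_usc_on[OF compact_imp_closed[OF \<open>compact K\<close>] \<open>usc_on K f\<close>])
    fix Y assume "finite Y" "Y \<subseteq> K"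
    show "K \<inter> (\<Inter>y\<in>Y. {w\<in>K. f y \<le> f w}) \<noteq> {}"
    proof (cases "Y = {}")
      case True
      with \<open>K \<noteq> {}\<close> show ?thesis by simp
    next
      case False
      with \<open>finite Y\<close> have "Max (f ` Y) \<in> f ` Y" by simp
      then obtain y0 where "y0 \<in> Y" "f y0 = Max (f ` Y)" by auto
      with \<open>finite Y\<close> \<open>Y \<subseteq> K\<close> have "y0 \<in> K \<inter> (\<Inter>y\<in>Y. {w\<in>K. f y \<le> f w})"
        by auto
      then show ?thesis by blast
    qed
  qed
  then show ?thesis by blast
qed

lemma usc_on_mult_compose_add:
  fixes F :: "'a::topological_space \<Rightarrow> real" and h :: "'b::topological_space \<Rightarrow> 'a"
  assumes usc: "usc_on S F" and h: "continuous_on K h" "h ` K \<subseteq> S" and "0 < a"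
    and g: "continuous_on K g"
  shows "usc_on K (\<lambda>y. a * F (h y) + g y)"
  unfolding usc_on_def
proof (intro ballI allI impI)
  fix z e assume "z \<in> K" "(0::real) < e"
  then have "h z \<in> S" using h by auto
  then have "\<forall>\<^sub>F w in at (h z) within S. F w < F (h z) + e / (2 * a)"
    using usc \<open>0 < e\<close> \<open>0 < a\<close> unfolding usc_on_def by auto
  then have "\<forall>\<^sub>F w in nhds (h z). w \<in> S \<longrightarrow> F w < F (h z) + e / (2 * a)"
    unfolding eventually_at_filter using \<open>0 < e\<close> \<open>0 < a\<close> by (auto elim: eventually_mono)
  moreover have "(h \<longlongrightarrow> h z) (at z within K)"
    using h(1) \<open>z \<in> K\<close> continuous_on_def by blast
  ultimately have F_near: "\<forall>\<^sub>F y in at z within K. h y \<in> S \<longrightarrow> F (h y) < F (h z) + e / (2 * a)"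
    by (rule eventually_compose_filterlim)
  have "(g \<longlongrightarrow> g z) (at z within K)"
    using g \<open>z \<in> K\<close> continuous_on_def by blast
  then have g_near: "\<forall>\<^sub>F y in at z within K. dist (g y) (g z) < e / 2"
    using \<open>0 < e\<close> unfolding tendsto_iff by (meson half_gt_zero)
  have "\<forall>\<^sub>F y in at z within K. y \<in> K"
    by (simp add: eventually_at_filter)
  with F_near g_near show "\<forall>\<^sub>F y in at z within K. a * F (h y) + g y < a * F (h z) + g z + e"
  proof eventually_elim
    case (elim y)
    with h have "a * F (h y) < a * F (h z) + e / 2"
      using \<open>0 < a\<close> by (auto simp: field_simps)
    moreover have "g y < g z + e / 2"
      using elim(2) by (auto simp: dist_real_def abs_if split: if_splits)
    ultimately show ?case by linarith
  qed
qed

lemma usc_on_diff_lsc_on: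
  assumes lsc: "lsc_on S W" and "K \<subseteq> S" and g: "continuous_on K g"
  shows "usc_on K (\<lambda>y. g y - W y)"
  unfolding usc_on_def
proof (intro ballI allI impI)
  fix z e assume "z \<in> K" "(0::real) < e"
  then have "\<forall>\<^sub>F y in at z within S. W z - e / 2 < W y"
    using lsc \<open>K \<subseteq> S\<close> unfolding lsc_on_def by auto
  then have W_near: "\<forall>\<^sub>F y in at z within K. W z - e / 2 < W y"
    by (meson \<open>K \<subseteq> S\<close> at_le filter_leD)
  have "(g \<longlongrightarrow> g z) (at z within K)"
    using g \<open>z \<in> K\<close> continuous_on_def by blast
  then have "\<forall>\<^sub>F y in at z within K. dist (g y) (g z) < e / 2"
    using \<open>0 < e\<close> unfolding tendsto_iff by (meson half_gt_zero)
  with W_near show "\<forall>\<^sub>F y in at z within K. g y - W y < g z - W z + e"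
    by eventually_elim (auto simp: dist_real_def abs_if split: if_splits)
qed

lemma convex_on_above_tangent_right:
  fixes f :: "real \<Rightarrow> real"
  assumes convex: "convex_on {c..x} f" and "c < x"
    and deriv: "(f has_real_derivative d) (at c within {c..x})"
  shows "d * (x - c) \<le> f x - f c"
proof -
  have "(f has_real_derivative d) (at c within {c<..<x})"
    using deriv by (rule has_field_derivative_subset) auto
  then have lim: "((\<lambda>y. (f y - f c) / (y - c)) \<longlongrightarrow> d) (at c within {c<..<x})"
    unfolding has_field_derivative_iff .
  have slopes: "\<forall>\<^sub>F y in at c within {c<..<x}. (f y - f c) / (y - c) \<le> (f x - f c) / (x - c)"
    unfolding eventually_at_filter
  proof (rule always_eventually, intro allI impI)
    fix y assume "y \<noteq> c" and y: "y \<in> {c<..<x}"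
    then have "f y \<le> (f x - f c) / (x - c) * (y - c) + f c"
      by (intro convex_onD_Icc'[OF convex]) auto
    with y show "(f y - f c) / (y - c) \<le> (f x - f c) / (x - c)"
      by (simp add: pos_divide_le_eq)
  qed
  have "d \<le> (f x - f c) / (x - c)"
    using lim slopes by (rule tendsto_upperbound)
      (use \<open>c < x\<close> in \<open>simp add: trivial_limit_within islimpt_greaterThanLessThan1\<close>)
  with \<open>c < x\<close> show ?thesis by (simp add: pos_le_divide_eq)
qed

lemma convex_on_atLeast_above_tangent:
  fixes f :: "real \<Rightarrow> real"
  assumes convex: "convex_on {a..} f" and "a \<le> c" "a \<le> x"
    and deriv: "(f has_real_derivative d) (at c within {a..})"
  shows "d * (x - c) \<le> f x - f c"
proof (cases x c rule: linorder_cases)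
  case less
  then have "c \<in> interior {a..}" using \<open>a \<le> x\<close> by auto
  with less show ?thesis
    using convex_on_imp_above_tangent[OF convex _ _ _ deriv] \<open>a \<le> x\<close>
    by (simp add: mult.commute is_interval_connected)
next
  case greater
  then show ?thesis
    using \<open>a \<le> c\<close> convex_on_subset[OF convex] has_field_derivative_subset[OF deriv]
    by (intro convex_on_above_tangent_right) auto
qed simp

lemma homogeneous_not_strict_concave_on:
  fixes f :: "'a::real_vector \<Rightarrow> real"
  assumes homog: "\<forall>z\<in>C. \<forall>t>0. f (t *\<^sub>R z) = t * f z"
    and "z \<in> C" "2 *\<^sub>R z \<in> C" "z \<noteq> 0"
  shows "\<not> strict_concave_on C f"
proof
  assume "strict_concave_on C f"
  note strict = this[unfolded strict_concave_on_def strict_convex_on_def, rule_format]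
  have "z \<noteq> 2 *\<^sub>R z"
    using \<open>z \<noteq> 0\<close> by (metis add_cancel_left_right scaleR_2)
  then have "- f ((1 - 1/2) *\<^sub>R z + (1/2) *\<^sub>R (2 *\<^sub>R z)) < (1 - 1/2) * - f z + (1/2) * - f (2 *\<^sub>R z)"
    by (intro strict) (use \<open>z \<in> C\<close> \<open>2 *\<^sub>R z \<in> C\<close> in auto)
  moreover have "(1 - 1/2) *\<^sub>R z + (1/2) *\<^sub>R (2 *\<^sub>R z) = (3/2) *\<^sub>R z"
    by (simp add: scaleR_add_left[of "1/2" 1, simplified])
  ultimately show False
    using homog \<open>z \<in> C\<close> by simp
qed

text \<open>Superlinear growth makes the objective fall below its value at 0 for large L,
  so it suffices to maximize over a compact interval.\<close>
lemma labor_objective_attains_max: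
  fixes W :: "real \<Rightarrow> real"
  assumes W_lsc: "lsc_on {0..} W" and W_growth: "filterlim (\<lambda>L. W L / L) at_top at_top"
  shows "\<exists>Ls\<ge>0. \<forall>L\<ge>0. L * y - W L \<le> Ls * y - W Ls"
proof -
  define Z where "Z = \<bar>y\<bar> + \<bar>W 0\<bar> + 1"
  from W_growth have "\<forall>\<^sub>F L in at_top. Z \<le> W L / L"
    by (simp add: filterlim_at_top)
  then obtain B where B: "\<And>L. B \<le> L \<Longrightarrow> Z \<le> W L / L"
    by (auto simp: eventually_at_top_linorder)
  define R where "R = max B 1"
  have far: "L * y - W L < - W 0" if "R < L" for L
  proof -
    have "1 < L" "B \<le> L" using that by (auto simp: R_def)
    then have "Z * L \<le> W L" using B[OF \<open>B \<le> L\<close>] by (simp add: pos_le_divide_eq)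
    moreover have "Z * L = \<bar>y\<bar> * L + (\<bar>W 0\<bar> + 1) * L"
      by (simp add: Z_def algebra_simps)
    moreover have "L * y \<le> \<bar>y\<bar> * L"
      using \<open>1 < L\<close> by (simp add: mult.commute mult_left_mono)
    moreover have "\<bar>W 0\<bar> + 1 \<le> (\<bar>W 0\<bar> + 1) * L"
      using mult_left_mono[of 1 L "\<bar>W 0\<bar> + 1"] \<open>1 < L\<close> by simp
    moreover have "W 0 \<le> \<bar>W 0\<bar>" by simp
    ultimately show ?thesis by linarith
  qed
  have "continuous_on {0..R} (\<lambda>L. L * y)"
    by (intro continuous_on_mult_right continuous_on_id)
  then have "usc_on {0..R} (\<lambda>L. L * y - W L)"
    by (rule usc_on_diff_lsc_on[OF W_lsc, rotated]) auto
  moreover have "{0..R} \<noteq> {}" by (simp add: R_def)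
  ultimately obtain Ls where Ls: "Ls \<in> {0..R}"
    and Ls_max: "\<forall>L\<in>{0..R}. L * y - W L \<le> Ls * y - W Ls"
    using usc_on_attains_max[OF compact_Icc] by blast
  have "L * y - W L \<le> Ls * y - W Ls" if "0 \<le> L" for L
  proof (cases "L \<le> R")
    case True
    with Ls_max \<open>0 \<le> L\<close> show ?thesis by simp
  next
    case False
    then have "L * y - W L < 0 * y - W 0" using far by simp
    also have "\<dots> \<le> Ls * y - W Ls" using Ls_max[rule_format, of 0] by (simp add: R_def)
    finally show ?thesis by simp
  qed
  with Ls show ?thesis by auto
qed

lemma labor_objective_max_of_derivative:
  fixes W :: "real \<Rightarrow> real"
  assumes "convex_on {0..} W" and "0 \<le> Ls" and "(W has_real_derivative y) (at Ls within {0..})"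
  shows "\<forall>L\<ge>0. L * y - W L \<le> Ls * y - W Ls"
proof (intro allI impI)
  fix L :: real assume "0 \<le> L"
  with assms have "y * (L - Ls) \<le> W L - W Ls"
    by (intro convex_on_atLeast_above_tangent)
  then show "L * y - W L \<le> Ls * y - W Ls"
    by (simp add: algebra_simps)
qed

lemma Wstar_eq_maximum:
  assumes "0 \<le> Ls" and "\<forall>L\<ge>0. L * y - W L \<le> Ls * y - W Ls"
  shows "Wstar W y = Ls * y - W Ls"
  unfolding Wstar_def by (rule cSup_eq_maximum) (use assms in auto)

definition budget_set :: "real^'n \<Rightarrow> real \<Rightarrow> real \<Rightarrow> ((real^'n) \<times> real) set" where
  "budget_set P PE B = {(q, E) \<in> unit_inputs. (\<Sum>j\<in>UNIV. P $ j * q $ j) + PE * E \<le> B}"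

lemma compact_budget_set:
  assumes P: "\<forall>j. 0 < P $ j" and "0 < PE"
  shows "compact (budget_set P PE B)"
proof -
  have budget_eq: "budget_set P PE B =
      {z. (\<forall>j. 0 \<le> fst z $ j) \<and> 0 \<le> snd z \<and> (\<Sum>j\<in>UNIV. P $ j * fst z $ j) + PE * snd z \<le> B}"
    by (auto simp: budget_set_def unit_inputs_def)
  have "closed (budget_set P PE B)"
    unfolding budget_eq
    by (intro closed_Collect_conj closed_Collect_all closed_Collect_le continuous_intros)
  moreover have "budget_set P PE B \<subseteq> cbox 0 (\<chi> j. B / P $ j) \<times> cbox 0 (B / PE)"
  proof
    fix z assume "z \<in> budget_set P PE B"
    moreover obtain q E where z: "z = (q, E)" by fastforce
    ultimately have q: "\<forall>j. 0 \<le> q $ j" and "0 \<le> E" and budget: "(\<Sum>j\<in>UNIV. P $ j * q $ j) + PE * E \<le> B"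
      by (auto simp: budget_set_def unit_inputs_def)
    have cost_q: "P $ j * q $ j \<le> (\<Sum>j\<in>UNIV. P $ j * q $ j)" for j
      using q P by (intro member_le_sum mult_nonneg_nonneg) (auto simp: less_imp_le)
    have "0 \<le> (\<Sum>j\<in>UNIV. P $ j * q $ j)"
      using q P by (intro sum_nonneg mult_nonneg_nonneg) (auto simp: less_imp_le)
    moreover have "0 \<le> PE * E"
      using \<open>0 < PE\<close> \<open>0 \<le> E\<close> by simp
    ultimately have "P $ j * q $ j \<le> B" "PE * E \<le> B" for j
      using budget cost_q[of j] by linarith+
    with P \<open>0 < PE\<close> q \<open>0 \<le> E\<close> show "z \<in> cbox 0 (\<chi> j. B / P $ j) \<times> cbox 0 (B / PE)"
      by (auto simp: z mem_box_cart pos_le_divide_eq mult.commute)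
  qed
  then have "bounded (budget_set P PE B)"
    by (rule bounded_subset[OF bounded_Times[OF bounded_cbox bounded_cbox]])
  ultimately show ?thesis by (simp add: compact_eq_bounded_closed)
qed

lemma usc_on_unit_profit:
  assumes F_usc: "usc_on inputs F" and P: "\<forall>j. 0 < P $ j"
  shows "usc_on unit_inputs (\<lambda>(q, E). unit_profit F i P PE q E)"
proof -
  have unit_profit_eq: "(\<lambda>(q, E). unit_profit F i P PE q E) =
      (\<lambda>z. P $ i * F (fst z, snd z, 1) + - ((\<Sum>j\<in>UNIV. P $ j * fst z $ j) + PE * snd z))"
    by (auto simp: unit_profit_def)
  show ?thesis
    unfolding unit_profit_eq using P
    by (intro usc_on_mult_compose_add[OF F_usc] continuous_intros) (auto simp: inputs_def unit_inputs_def)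
qed

text \<open>Outside the budget set with budget P_i c the unit profit is negative, while it is
  nonnegative at the origin; so its maximum over that compact set is global.\<close>
lemma unit_profit_attains_max:
  assumes F_nonneg: "\<forall>z\<in>inputs. 0 \<le> F z"
    and F_usc: "usc_on inputs F"
    and F_bound: "\<exists>c. \<forall>q E L. (q, E, L) \<in> inputs \<longrightarrow> F (q, E, L) \<le> c * L"
    and P: "\<forall>j. 0 < P $ j" and "0 < PE"
  shows "\<exists>qt Et. (qt, Et) \<in> unit_inputs \<and>
    (\<forall>(q, E)\<in>unit_inputs. unit_profit F i P PE q E \<le> unit_profit F i P PE qt Et)"
proof -
  let ?U = "unit_profit F i P PE"
  obtain c where c: "\<And>q E L. (q, E, L) \<in> inputs \<Longrightarrow> F (q, E, L) \<le> c * L"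
    using F_bound by blast
  define K where "K = budget_set P PE (P $ i * c)"
  have U_le: "?U q E \<le> P $ i * c - ((\<Sum>j\<in>UNIV. P $ j * q $ j) + PE * E)"
    if "(q, E) \<in> unit_inputs" for q E
  proof -
    have "F (q, E, 1) \<le> c"
      using that c[of q E 1] by (simp add: inputs_def unit_inputs_def)
    then have "P $ i * F (q, E, 1) \<le> P $ i * c"
      using P by (simp add: less_imp_le)
    then show ?thesis by (simp add: unit_profit_def)
  qed
  have U_0: "0 \<le> ?U 0 0"
  proof -
    have "0 \<le> F (0, 0, 1)"
      using F_nonneg by (simp add: inputs_def)
    then show ?thesis
      using P by (simp add: unit_profit_def less_imp_le)
  qed
  have "(0, 0) \<in> K"
    using U_le[of 0 0] U_0 by (simp add: K_def budget_set_def unit_inputs_def)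
  have "usc_on K (\<lambda>(q, E). ?U q E)"
    using usc_on_unit_profit[OF F_usc P] by (rule usc_on_subset) (auto simp: K_def budget_set_def)
  then obtain z0 where "z0 \<in> K" and z0_max: "\<And>z. z \<in> K \<Longrightarrow> (\<lambda>(q, E). ?U q E) z \<le> (\<lambda>(q, E). ?U q E) z0"
    using usc_on_attains_max[OF compact_budget_set[OF P \<open>0 < PE\<close>]] \<open>(0, 0) \<in> K\<close> unfolding K_def by blast
  obtain q0 E0 where z0: "z0 = (q0, E0)" by fastforce
  have "?U q E \<le> ?U q0 E0" if "(q, E) \<in> unit_inputs" for q E
  proof (cases "(q, E) \<in> K")
    case True
    then show ?thesis using z0_max z0 by fastforce
  next
    case False
    with that have "P $ i * c < (\<Sum>j\<in>UNIV. P $ j * q $ j) + PE * E"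
      by (auto simp: K_def budget_set_def)
    with U_le[OF that] have "?U q E < 0" by linarith
    also have "0 \<le> ?U 0 0" by (rule U_0)
    also have "\<dots> \<le> ?U q0 E0" using z0_max[OF \<open>(0, 0) \<in> K\<close>] z0 by simp
    finally show ?thesis by simp
  qed
  moreover have "(q0, E0) \<in> unit_inputs"
    using \<open>z0 \<in> K\<close> z0 by (simp add: K_def budget_set_def)
  ultimately show ?thesis by blast
qed

lemma profit_tilde_eq_maximum:
  assumes "(qt, Et) \<in> unit_inputs"
    and "\<forall>(q, E)\<in>unit_inputs. unit_profit F i P PE q E \<le> unit_profit F i P PE qt Et"
  shows "profit_tilde F i P PE = unit_profit F i P PE qt Et"
  unfolding profit_tilde_def by (rule cSup_eq_maximum) (use assms in auto)

lemma profit_scaled_unit_input: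
  assumes F_homog: "\<forall>z\<in>inputs. \<forall>t>0. F (t *\<^sub>R z) = t * F z"
    and "(q, E) \<in> unit_inputs" and "0 \<le> L"
  shows "profit F W i P (L *\<^sub>R q) (E * L) L PE x = L * unit_profit F i P PE q E - W L - x * L"
proof (cases "L = 0")
  case True
  have "(0, 0, 0) \<in> inputs" by (simp add: inputs_def)
  then have "F (0, 0, 0) = 0"
    using F_homog[rule_format, of "(0, 0, 0)" 2] by simp
  with True show ?thesis by (simp add: profit_def)
next
  case False
  with \<open>0 \<le> L\<close> have "0 < L" by simp
  have "(q, E, 1) \<in> inputs"
    using \<open>(q, E) \<in> unit_inputs\<close> by (simp add: inputs_def unit_inputs_def)
  with F_homog \<open>0 < L\<close> have "F (L *\<^sub>R (q, E, 1)) = L * F (q, E, 1)" by blast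
  then have "F (L *\<^sub>R q, E * L, L) = L * F (q, E, 1)" by (simp add: mult.commute)
  moreover have "(\<Sum>j\<in>UNIV. P $ j * (L *\<^sub>R q) $ j) = L * (\<Sum>j\<in>UNIV. P $ j * q $ j)"
    by (simp add: sum_distrib_left algebra_simps)
  ultimately show ?thesis by (simp add: profit_def unit_profit_def algebra_simps)
qed

lemma profit_le_labor_objective:
  assumes F_homog: "\<forall>z\<in>inputs. \<forall>t>0. F (t *\<^sub>R z) = t * F z"
    and F_bound: "\<exists>c. \<forall>q E L. (q, E, L) \<in> inputs \<longrightarrow> F (q, E, L) \<le> c * L"
    and P: "\<forall>j. 0 \<le> P $ j" and "0 \<le> PE"
    and T: "\<forall>(q', E')\<in>unit_inputs. unit_profit F i P PE q' E' \<le> T"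
    and "(q, E, L) \<in> inputs"
  shows "profit F W i P q E L PE x \<le> L * (T - x) - W L"
proof (cases "L = 0")
  case True
  obtain c where c: "\<forall>q E L. (q, E, L) \<in> inputs \<longrightarrow> F (q, E, L) \<le> c * L"
    using F_bound by blast
  have "F (q, E, L) \<le> 0"
    using c \<open>(q, E, L) \<in> inputs\<close> True by fastforce
  with P have "P $ i * F (q, E, L) \<le> 0" by (simp add: mult_nonneg_nonpos)
  moreover have "0 \<le> (\<Sum>j\<in>UNIV. P $ j * q $ j)" "0 \<le> PE * E"
    using \<open>(q, E, L) \<in> inputs\<close> P \<open>0 \<le> PE\<close> by (auto simp: inputs_def intro!: sum_nonneg)
  ultimately show ?thesis using True by (simp add: profit_def)
next
  case False
  with \<open>(q, E, L) \<in> inputs\<close> have "0 < L" by (simp add: inputs_def)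
  define q' where "q' = (1 / L) *\<^sub>R q"
  define E' where "E' = E / L"
  have unit: "(q', E') \<in> unit_inputs"
    using \<open>(q, E, L) \<in> inputs\<close> \<open>0 < L\<close> by (auto simp: unit_inputs_def inputs_def q'_def E'_def)
  have "q = L *\<^sub>R q'" "E = E' * L"
    using \<open>0 < L\<close> by (auto simp: q'_def E'_def)
  then have "profit F W i P q E L PE x = L * unit_profit F i P PE q' E' - W L - x * L"
    using profit_scaled_unit_input[OF F_homog unit] \<open>0 < L\<close> by simp
  also have "\<dots> \<le> L * T - W L - x * L"
    using T unit \<open>0 < L\<close> by auto
  finally show ?thesis by (simp add: algebra_simps)
qed

lemma profit_max_of_unit_and_labor_max:
  fixes F :: "(real^'n) \<times> real \<times> real \<Rightarrow> real"
  assumes F_homog: "\<forall>z\<in>inputs. \<forall>t>0. F (t *\<^sub>R z) = t * F z"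
    and F_bound: "\<exists>c. \<forall>q E L. (q, E, L) \<in> inputs \<longrightarrow> F (q, E, L) \<le> c * L"
    and P: "\<forall>j. 0 \<le> P $ j" and "0 \<le> PE"
    and unit: "(qt, Et) \<in> unit_inputs"
    and unit_max: "\<forall>(q, E)\<in>unit_inputs. unit_profit F i P PE q E \<le> unit_profit F i P PE qt Et"
    and "0 \<le> Ls"
    and labor_max: "\<forall>L\<ge>0. L * (profit_tilde F i P PE - x) - W L
                      \<le> Ls * (profit_tilde F i P PE - x) - W Ls"
  shows "(Ls *\<^sub>R qt, Et * Ls, Ls) \<in> inputs"
    and "profit F W i P (Ls *\<^sub>R qt) (Et * Ls) Ls PE x = Ls * (profit_tilde F i P PE - x) - W Ls"
    and "\<forall>(q, E, L)\<in>inputs. profit F W i P q E L PE x \<le> profit F W i P (Ls *\<^sub>R qt) (Et * Ls) Ls PE x"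
proof -
  note T = profit_tilde_eq_maximum[OF unit unit_max]
  show "(Ls *\<^sub>R qt, Et * Ls, Ls) \<in> inputs"
    using unit \<open>0 \<le> Ls\<close> by (simp add: inputs_def unit_inputs_def)
  show attained: "profit F W i P (Ls *\<^sub>R qt) (Et * Ls) Ls PE x = Ls * (profit_tilde F i P PE - x) - W Ls"
    using profit_scaled_unit_input[OF F_homog unit \<open>0 \<le> Ls\<close>, of W i P PE x]
    by (simp add: T algebra_simps)
  show "\<forall>(q, E, L)\<in>inputs. profit F W i P q E L PE x \<le> profit F W i P (Ls *\<^sub>R qt) (Et * Ls) Ls PE x"
  proof (clarify)
    fix q :: "real^'n" and E L assume "(q, E, L) \<in> inputs"
    then have "profit F W i P q E L PE x \<le> L * (profit_tilde F i P PE - x) - W L"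
      by (rule profit_le_labor_objective[OF F_homog F_bound P \<open>0 \<le> PE\<close> unit_max[folded T]])
    also have "\<dots> \<le> Ls * (profit_tilde F i P PE - x) - W Ls"
      using labor_max \<open>(q, E, L) \<in> inputs\<close> by (simp add: inputs_def)
    finally show "profit F W i P q E L PE x \<le> profit F W i P (Ls *\<^sub>R qt) (Et * Ls) Ls PE x"
      by (simp only: attained)
  qed
qed

lemma profit_bar_eq_maximum:
  assumes "(qs, Es, Ls) \<in> inputs"
    and "\<forall>(q, E, L)\<in>inputs. profit F W i P q E L PE x \<le> profit F W i P qs Es Ls PE x"
  shows "profit_bar F W i P PE x = profit F W i P qs Es Ls PE x"
  unfolding profit_bar_def by (rule cSup_eq_maximum) (use assms in \<open>force+\<close>)

lemma profit_max_of_first_order_condition: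
  fixes F :: "(real^'n) \<times> real \<times> real \<Rightarrow> real"
  assumes F_homog: "\<forall>z\<in>inputs. \<forall>t>0. F (t *\<^sub>R z) = t * F z"
    and F_bound: "\<exists>c. \<forall>q E L. (q, E, L) \<in> inputs \<longrightarrow> F (q, E, L) \<le> c * L"
    and P: "\<forall>j. 0 \<le> P $ j" and "0 \<le> PE"
    and W_convex: "convex_on {0..} W"
    and unit: "(qt, Et) \<in> unit_inputs"
    and unit_max: "\<forall>(q, E)\<in>unit_inputs. unit_profit F i P PE q E \<le> unit_profit F i P PE qt Et"
    and "0 \<le> Ls"
    and deriv: "(W has_real_derivative (profit_tilde F i P PE - x)) (at Ls within {0..})"
  shows "(Ls *\<^sub>R qt, Et * Ls, Ls) \<in> inputs \<and>
    (\<forall>(q, E, L)\<in>inputs. profit F W i P q E L PE x \<le> profit F W i P (Ls *\<^sub>R qt) (Et * Ls) Ls PE x)"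
  using profit_max_of_unit_and_labor_max[OF F_homog F_bound P \<open>0 \<le> PE\<close> unit unit_max \<open>0 \<le> Ls\<close>
      labor_objective_max_of_derivative[OF W_convex \<open>0 \<le> Ls\<close> deriv]]
  by blast

theorem proposition4p1:
  fixes F :: "(real^'n) \<times> real \<times> real \<Rightarrow> real"
    and W :: "real \<Rightarrow> real"
    and i :: 'n
  assumes F_nonneg: "\<forall>z\<in>inputs. 0 \<le> F z"
    and F_incr_q: "\<forall>q E L j t. (q, E, L) \<in> inputs \<and> 0 \<le> t \<longrightarrow>
                      F (q, E, L) \<le> F (q + t *\<^sub>R axis j 1, E, L)"
    and F_incr_E: "\<forall>q E L t. (q, E, L) \<in> inputs \<and> 0 \<le> t \<longrightarrow> F (q, E, L) \<le> F (q, E + t, L)"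
    and F_incr_L: "\<forall>q E L t. (q, E, L) \<in> inputs \<and> 0 \<le> t \<longrightarrow> F (q, E, L) \<le> F (q, E, L + t)"
    and F_usc: "usc_on inputs F"
    and F_concave: "concave_on inputs F"
    and F_homog: "\<forall>z\<in>inputs. \<forall>t>0. F (t *\<^sub>R z) = t * F z"
    and F_bound: "\<exists>c. \<forall>q E L. (q, E, L) \<in> inputs \<longrightarrow> F (q, E, L) \<le> c * L"
    and W_pos: "\<forall>L\<ge>0. 0 < W L"
    and W_incr: "strict_mono_on {0..} W"
    and W_lsc: "lsc_on {0..} W"
    and W_convex: "convex_on {0..} W"
    and W_growth: "filterlim (\<lambda>L. W L / L) at_top at_top"
  shows
    "\<forall>P PE x. (\<forall>j. 0 < P $ j) \<and> 0 < PE \<and> 0 < x \<longrightarrow>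
       \<comment> \<open>(i) existence of a maximizer\<close>
       (\<exists>z\<in>inputs. \<forall>z'\<in>inputs.
          (case z' of (q, E, L) \<Rightarrow> profit F W i P q E L PE x)
          \<le> (case z of (q, E, L) \<Rightarrow> profit F W i P q E L PE x))
       \<comment> \<open>(i) uniqueness under strict concavity / convexity\<close>
     \<and> (strict_concave_on inputs F \<and> strict_convex_on {0..} W \<longrightarrow>
          (\<forall>z1\<in>inputs. \<forall>z2\<in>inputs.
             (\<forall>z'\<in>inputs.
                (case z' of (q, E, L) \<Rightarrow> profit F W i P q E L PE x)
                \<le> (case z1 of (q, E, L) \<Rightarrow> profit F W i P q E L PE x)) \<and>
             (\<forall>z'\<in>inputs.
                (case z' of (q, E, L) \<Rightarrow> profit F W i P q E L PE x)
                \<le> (case z2 of (q, E, L) \<Rightarrow> profit F W i P q E L PE x))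
             \<longrightarrow> z1 = z2))
       \<comment> \<open>(ii) value formula\<close>
     \<and> profit_bar F W i P PE x = Wstar W (profit_tilde F i P PE - x)
       \<comment> \<open>(iii) explicit optimal inputs\<close>
     \<and> (strict_convex_on {0..} W \<and> (\<forall>L\<ge>0. W differentiable (at L within {0..})) \<longrightarrow>
          (\<forall>qt Et Ls. (qt, Et) \<in> unit_inputs \<and>
              (\<forall>(q', E')\<in>unit_inputs. unit_profit F i P PE q' E' \<le> unit_profit F i P PE qt Et) \<and>
              0 \<le> Ls \<and> (W has_real_derivative (profit_tilde F i P PE - x)) (at Ls within {0..})
            \<longrightarrow> (Ls *\<^sub>R qt, Et * Ls, Ls) \<in> inputs \<and>
                (\<forall>(q, E, L)\<in>inputs. profit F W i P q E L PE x
                    \<le> profit F W i P (Ls *\<^sub>R qt) (Et * Ls) Ls PE x)))"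
  apply (intro allI impI)
  subgoal premises prices for P PE x
  proof -
    from prices have P: "\<forall>j. 0 < P $ j" and "0 < PE" by auto
    then have P_nonneg: "\<forall>j. 0 \<le> P $ j" and "0 \<le> PE" by (auto simp: less_imp_le)
    obtain q0 E0 where unit_max: "(q0, E0) \<in> unit_inputs"
        "\<forall>(q, E)\<in>unit_inputs. unit_profit F i P PE q E \<le> unit_profit F i P PE q0 E0"
      using unit_profit_attains_max[OF F_nonneg F_usc F_bound P \<open>0 < PE\<close>] by blast
    obtain L0 where labor_max: "0 \<le> L0"
        "\<forall>L\<ge>0. L * (profit_tilde F i P PE - x) - W L \<le> L0 * (profit_tilde F i P PE - x) - W L0"
      using labor_objective_attains_max[OF W_lsc W_growth] by blast
    note opt = profit_max_of_unit_and_labor_max[OF F_homog F_bound P_nonneg \<open>0 \<le> PE\<close> unit_max labor_max]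
    have "\<not> strict_concave_on inputs F"
      by (rule homogeneous_not_strict_concave_on[OF F_homog, of "(0, 0, 1)"])
        (simp_all add: inputs_def zero_prod_def)
    then show ?thesis
      using opt profit_bar_eq_maximum[OF opt(1,3)] Wstar_eq_maximum[OF labor_max]
        profit_max_of_first_order_condition[OF F_homog F_bound P_nonneg \<open>0 \<le> PE\<close> W_convex]
      by (intro conjI impI allI bexI[of _ "(L0 *\<^sub>R q0, E0 * L0, L0)"]) auto
  qed
  done

end
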